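(* For every $k\ge2$ one has $[D^{(k)}_x,D^{(k)}_y]=0$ on $\mathcal E_k$, and also $[D^{( * )}_x,D^{( * )}_y]=0$ on $\mathcal E_*$.
   Context: Let $\mathcal E_1$ be the system $u_y+vu_x=\frac1{v-u}$, $v_y+uv_x=\frac1{u-v}$ with internal coordinates $x,y,u_i=\partial^iu/\partial x^i$, $v_i=\partial^iv/\partial x^i$ ($i\ge0$) and total derivatives $D_x=\partial_x+\sum_i(u_{i+1}\partial_{u_i}+v_{i+1}\partial_{v_i})$, $D_y=\partial_y+\sum_i\big(D_x^i(\tfrac1{v-u}-vu_1)\partial_{u_i}+D_x^i(\tfrac1{u-v}-uv_1)\partial_{v_i}\big)$. Let $\sigma_m=\sum_{i+j=m}u^iv^j$, $\psi^{(1)}=y$, $\psi^{(2)}=x$, and let $\psi^{(k)}$, $k\ge3$, be new coordinates; for $k\ge2$ put $X^{(k)}=\sigma_{k-2}-\sum_{i=1}^{k-3}i\,\sigma_{k-i-3}\psi^{(i)}$ and for $k\ge3$ put $Y^{(k)}=-uv\,X^{(k-1)}-(k-2)\psi^{(k-2)}$. For $k\ge2$, $\mathcal E_k=\mathcal E_1\times\mathbb R^{k-1}$ has the additional coordinates $\psi^{(3)},\dots,\psi^{(k+1)}$ and the vector fields $D^{(k)}_x=D_x+\sum_{i=3}^{k+1}X^{(i)}\partial/\partial\psi^{(i)}$, $D^{(k)}_y=D_y+\sum_{i=3}^{k+1}Y^{(i)}\partial/\partial\psi^{(i)}$; $\mathcal E_*$ is the inverse limit (all $\psi^{(k)}$,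 $k\ge3$) with $D^{( * )}_x,D^{( * )}_y$ defined by the infinite sums. *)

theory Defs
  imports "HOL-Analysis.Analysis"
begin

text \<open>Internal coordinates of the (infinite) jet-type manifolds:
  x, y, u_i, v_i (i \<ge> 0) and the nonlocal coordinates psi^(k) (k \<ge> 3).
  On E_k only psi^(3..k+1) are relevant; the vector fields below have zero
  components along, and coefficients independent of, the remaining psi's.\<close>

datatype coord = CX | CY | CU nat | CV nat | CPsi nat

type_synonym pt = "coord \<Rightarrow> real"

type_synonym vfield = "coord \<Rightarrow> pt \<Rightarrow> real"

definition pderiv_coord :: "coord \<Rightarrow> (pt \<Rightarrow> real) \<Rightarrow> pt \<Rightarrow> real" where
  "pderiv_coord c f p = deriv (\<lambda>t. f (p(c := t))) (p c)"

definition apply_vf :: "vfield \<Rightarrow> (pt \<Rightarrow> real) \<Rightarrow> pt \<Rightarrow> real" where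
  "apply_vf X f p = infsum (\<lambda>c. X c p * pderiv_coord c f p) UNIV"

definition lie_bracket :: "vfield \<Rightarrow> vfield \<Rightarrow> vfield" where
  "lie_bracket X Y c p = apply_vf X (Y c) p - apply_vf Y (X c) p"

fun Dx :: vfield where
  "Dx CX = (\<lambda>p. 1)"
| "Dx CY = (\<lambda>p. 0)"
| "Dx (CU i) = (\<lambda>p. p (CU (Suc i)))"
| "Dx (CV i) = (\<lambda>p. p (CV (Suc i)))"
| "Dx (CPsi k) = (\<lambda>p. 0)"

definition rhsU :: "pt \<Rightarrow> real" where
  "rhsU p = 1 / (p (CV 0) - p (CU 0)) - p (CV 0) * p (CU 1)"

definition rhsV :: "pt \<Rightarrow> real" where
  "rhsV p = 1 / (p (CU 0) - p (CV 0)) - p (CU 0) * p (CV 1)"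

fun Dy :: vfield where
  "Dy CX = (\<lambda>p. 0)"
| "Dy CY = (\<lambda>p. 1)"
| "Dy (CU i) = (apply_vf Dx ^^ i) rhsU"
| "Dy (CV i) = (apply_vf Dx ^^ i) rhsV"
| "Dy (CPsi k) = (\<lambda>p. 0)"

definition sigma :: "nat \<Rightarrow> pt \<Rightarrow> real" where
  "sigma m p = (\<Sum>i\<le>m. p (CU 0) ^ i * p (CV 0) ^ (m - i))"

definition psi :: "nat \<Rightarrow> pt \<Rightarrow> real" where
  "psi k p = (if k = 1 then p CY else if k = 2 then p CX else p (CPsi k))"

definition Xk :: "nat \<Rightarrow> pt \<Rightarrow> real" where
  "Xk k p = sigma (k - 2) p
      - (\<Sum>i = 1..k - 3. real i * sigma (k - i - 3) p * psi i p)"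

definition Yk :: "nat \<Rightarrow> pt \<Rightarrow> real" where
  "Yk k p = - (p (CU 0) * p (CV 0)) * Xk (k - 1) p - real (k - 2) * psi (k - 2) p"

definition Dxk :: "nat \<Rightarrow> vfield" where
  "Dxk k c = (case c of CPsi i \<Rightarrow> (if 3 \<le> i \<and> i \<le> k + 1 then Xk i else (\<lambda>p. 0))
                     | _ \<Rightarrow> Dx c)"

definition Dyk :: "nat \<Rightarrow> vfield" where
  "Dyk k c = (case c of CPsi i \<Rightarrow> (if 3 \<le> i \<and> i \<le> k + 1 then Yk i else (\<lambda>p. 0))
                     | _ \<Rightarrow> Dy c)"

definition Dx_star :: vfield where
  "Dx_star c = (case c of CPsi i \<Rightarrow> (if 3 \<le> i then Xk i else (\<lambda>p. 0)) | _ \<Rightarrow> Dx c)"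

definition Dy_star :: vfield where
  "Dy_star c = (case c of CPsi i \<Rightarrow> (if 3 \<le> i then Yk i else (\<lambda>p. 0)) | _ \<Rightarrow> Dy c)"

end

theory Submission
  imports Defs
begin

(* On the coordinates x, y, u_i, v_i all the fields act as D_x, D_y, which commute on E_1 because
   D_y u_{i+1} is by definition D_x (D_y u_i).  Along psi^(j) the bracket is D_x Y^(j) - D_y X^(j),
   and since D_x psi^(j) = X^(j), D_y psi^(j) = Y^(j) (also for psi^(1) = y, psi^(2) = x), the
   relations X^(j) = (u + v) X^(j-1) + Y^(j-1) and Y^(j) = -uv X^(j-1) - (j - 2) psi^(j-2) turn
   D_y X^(j) = D_x Y^(j) into an induction on j whose step needs only
   D_y (u + v) = - D_x (uv)  and  D_y (uv) + (u + v) D_x (uv) - uv D_x (u + v) = 1,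
   the latter being where u \<noteq> v enters.  The components of D^* along x, y, u_i, v_i and
   psi^(3), ..., psi^(k+1) depend on these coordinates only, and there D^(k) agrees with D^*;
   so the bracket on E_k is the restriction of the one on E_*. *)

section \<open>Derivations on functions of finitely many coordinates\<close>

definition depends_on :: "coord set \<Rightarrow> (pt \<Rightarrow> real) \<Rightarrow> bool" where
  "depends_on S f \<longleftrightarrow> (\<forall>p q. (\<forall>c\<in>S. p c = q c) \<longrightarrow> f p = f q)"

definition partially_differentiable :: "(pt \<Rightarrow> real) \<Rightarrow> bool" where
  "partially_differentiable f \<longleftrightarrow> (\<forall>c p. (\<lambda>t. f (p(c := t))) differentiable (at (p c)))"

(* For such f, apply_vf V f is a finite sum over the coordinates f depends on, hence Leibniz. *)
definition regular_fun :: "(pt \<Rightarrow> real) \<Rightarrow> bool" where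
  "regular_fun f \<longleftrightarrow> (\<exists>S. finite S \<and> depends_on S f) \<and> partially_differentiable f"

lemma depends_on_mono: "depends_on S f \<Longrightarrow> S \<subseteq> T \<Longrightarrow> depends_on T f"
  unfolding depends_on_def by blast

lemma depends_on_const: "depends_on S (\<lambda>_. a)"
  unfolding depends_on_def by simp

lemma depends_on_proj: "c \<in> S \<Longrightarrow> depends_on S (\<lambda>q. q c)"
  unfolding depends_on_def by simp

lemma depends_on_comp: "depends_on S f \<Longrightarrow> depends_on S (\<lambda>q. h (f q))"
  unfolding depends_on_def by metis

lemma depends_on_comp2:
  "depends_on S f \<Longrightarrow> depends_on S g \<Longrightarrow> depends_on S (\<lambda>q. h (f q) (g q))"
  unfolding depends_on_def by metis

lemma pderiv_coord_eq_0:
  assumes "depends_on S f" "c \<notin> S"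
  shows "pderiv_coord c f p = 0"
proof -
  have "(\<lambda>t. f (p(c := t))) = (\<lambda>t. f p)"
    using assms unfolding depends_on_def by (intro ext) (metis fun_upd_other)
  then show ?thesis
    unfolding pderiv_coord_def by (simp add: DERIV_imp_deriv)
qed

lemma depends_on_pderiv_coord:
  assumes "depends_on S f"
  shows "depends_on S (pderiv_coord c f)"
proof (cases "c \<in> S")
  case True
  have "pderiv_coord c f p = pderiv_coord c f q" if "\<forall>d\<in>S. p d = q d" for p q
  proof -
    have "f (p(c := t)) = f (q(c := t))" for t
      using assms that unfolding depends_on_def by simp
    then show ?thesis
      using True that unfolding pderiv_coord_def by simp
  qed
  then show ?thesis
    unfolding depends_on_def by blast
next
  case False
  then have "pderiv_coord c f = (\<lambda>_. 0)"
    using pderiv_coord_eq_0[OF assms] by auto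
  then show ?thesis
    by (simp add: depends_on_const)
qed

lemma has_real_derivative_pderiv_coord:
  "partially_differentiable f \<Longrightarrow>
    ((\<lambda>t. f (p(c := t))) has_real_derivative pderiv_coord c f p) (at (p c))"
  unfolding partially_differentiable_def pderiv_coord_def
  using DERIV_deriv_iff_real_differentiable by blast

lemma partially_differentiableI:
  "(\<And>c p. \<exists>D. ((\<lambda>t. f (p(c := t))) has_real_derivative D) (at (p c))) \<Longrightarrow>
    partially_differentiable f"
  unfolding partially_differentiable_def using real_differentiable_def by blast

lemma pderiv_coord_const: "pderiv_coord c (\<lambda>_. a) p = 0"
  unfolding pderiv_coord_def by (simp add: DERIV_imp_deriv)

lemma pderiv_coord_proj: "pderiv_coord c (\<lambda>q. q d) p = (if c = d then 1 else 0)"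
  unfolding pderiv_coord_def by (auto intro: DERIV_imp_deriv)

lemma pderiv_coord_add:
  "partially_differentiable f \<Longrightarrow> partially_differentiable g \<Longrightarrow>
    pderiv_coord c (\<lambda>q. f q + g q) p = pderiv_coord c f p + pderiv_coord c g p"
  unfolding pderiv_coord_def[of c "\<lambda>q. f q + g q"]
  by (intro DERIV_imp_deriv DERIV_add has_real_derivative_pderiv_coord)

lemma pderiv_coord_minus:
  "partially_differentiable f \<Longrightarrow> pderiv_coord c (\<lambda>q. - f q) p = - pderiv_coord c f p"
  unfolding pderiv_coord_def[of c "\<lambda>q. - f q"]
  by (intro DERIV_imp_deriv DERIV_minus has_real_derivative_pderiv_coord)

lemma pderiv_coord_mult:
  assumes "partially_differentiable f" "partially_differentiable g"
  shows "pderiv_coord c (\<lambda>q. f q * g q) p = f p * pderiv_coord c g p + pderiv_coord c f p * g p"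
proof -
  have "((\<lambda>t. f (p(c := t)) * g (p(c := t))) has_real_derivative
      pderiv_coord c f p * g p + pderiv_coord c g p * f p) (at (p c))"
    using DERIV_mult[OF has_real_derivative_pderiv_coord[OF assms(1), of p c]
        has_real_derivative_pderiv_coord[OF assms(2), of p c]] by simp
  then show ?thesis
    unfolding pderiv_coord_def[of c "\<lambda>q. f q * g q"] by (simp add: DERIV_imp_deriv)
qed

lemma partially_differentiable_const: "partially_differentiable (\<lambda>_. a)"
  by (rule partially_differentiableI, rule exI, rule DERIV_const)

lemma partially_differentiable_proj: "partially_differentiable (\<lambda>q. q d)"
proof (rule partially_differentiableI)
  fix c p
  show "\<exists>D. ((\<lambda>t. (p(c := t)) d) has_real_derivative D) (at (p c))"
    by (cases "c = d") (auto intro: DERIV_ident DERIV_const)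
qed

lemma partially_differentiable_add:
  "partially_differentiable f \<Longrightarrow> partially_differentiable g \<Longrightarrow>
    partially_differentiable (\<lambda>q. f q + g q)"
  by (rule partially_differentiableI, rule exI,
      rule DERIV_add[OF has_real_derivative_pderiv_coord has_real_derivative_pderiv_coord])

lemma partially_differentiable_minus:
  "partially_differentiable f \<Longrightarrow> partially_differentiable (\<lambda>q. - f q)"
  by (rule partially_differentiableI, rule exI,
      rule DERIV_minus[OF has_real_derivative_pderiv_coord])

lemma partially_differentiable_mult:
  "partially_differentiable f \<Longrightarrow> partially_differentiable g \<Longrightarrow>
    partially_differentiable (\<lambda>q. f q * g q)"
  by (rule partially_differentiableI, rule exI,
      rule DERIV_mult[OF has_real_derivative_pderiv_coord has_real_derivative_pderiv_coord])

lemma apply_vf_eq_sum: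
  assumes "finite S" "depends_on S f"
  shows "apply_vf V f p = (\<Sum>c\<in>S. V c p * pderiv_coord c f p)"
  unfolding apply_vf_def
  by (subst infsum_finite[OF assms(1), symmetric], rule infsum_cong_neutral)
     (use pderiv_coord_eq_0[OF assms(2)] in auto)

lemma apply_vf_cong:
  assumes "depends_on S f" "\<And>c. c \<in> S \<Longrightarrow> V c p = W c p"
  shows "apply_vf V f p = apply_vf W f p"
proof -
  have "V c p * pderiv_coord c f p = W c p * pderiv_coord c f p" for c
    by (cases "c \<in> S") (simp_all add: assms pderiv_coord_eq_0[OF assms(1)])
  then show ?thesis
    by (simp only: apply_vf_def)
qed

lemma depends_on_apply_vf:
  assumes f: "depends_on S f" and V: "\<And>c. c \<in> S \<Longrightarrow> depends_on S (V c)"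
  shows "depends_on S (apply_vf V f)"
  unfolding depends_on_def
proof (intro allI impI)
  fix p q :: pt
  assume pq: "\<forall>c\<in>S. p c = q c"
  have "V c p * pderiv_coord c f p = V c q * pderiv_coord c f q" for c
  proof (cases "c \<in> S")
    case True
    then show ?thesis
      using pq V depends_on_pderiv_coord[OF f] unfolding depends_on_def by metis
  next
    case False
    then show ?thesis
      by (simp add: pderiv_coord_eq_0[OF f])
  qed
  then show "apply_vf V f p = apply_vf V f q"
    unfolding apply_vf_def by simp
qed

lemma apply_vf_const: "apply_vf V (\<lambda>_. a) p = 0"
  unfolding apply_vf_def by (simp add: pderiv_coord_const)

lemma apply_vf_proj: "apply_vf V (\<lambda>q. q d) p = V d p"
  by (simp add: apply_vf_eq_sum[of "{d}"] depends_on_proj pderiv_coord_proj)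

lemma regular_funE:
  assumes "regular_fun f" "regular_fun g"
  obtains S where "finite S" "depends_on S f" "depends_on S g"
    "partially_differentiable f" "partially_differentiable g"
proof -
  obtain S T where "finite S" "depends_on S f" "finite T" "depends_on T g"
    using assms unfolding regular_fun_def by blast
  then show ?thesis
    using that[of "S \<union> T"] assms depends_on_mono[of S f] depends_on_mono[of T g]
    unfolding regular_fun_def by blast
qed

lemma regular_fun_const: "regular_fun (\<lambda>_. a)"
  unfolding regular_fun_def by (blast intro: depends_on_const partially_differentiable_const)

lemma regular_fun_proj: "regular_fun (\<lambda>q. q d)"
  unfolding regular_fun_def
  by (blast intro: depends_on_proj partially_differentiable_proj)

lemma regular_fun_minus: "regular_fun f \<Longrightarrow> regular_fun (\<lambda>q. - f q)"
  unfolding regular_fun_def by (blast intro: depends_on_comp partially_differentiable_minus)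

lemma regular_fun_add: "regular_fun f \<Longrightarrow> regular_fun g \<Longrightarrow> regular_fun (\<lambda>q. f q + g q)"
  by (erule regular_funE) (auto simp: regular_fun_def
      intro: depends_on_comp2 partially_differentiable_add)

lemma regular_fun_mult: "regular_fun f \<Longrightarrow> regular_fun g \<Longrightarrow> regular_fun (\<lambda>q. f q * g q)"
  by (erule regular_funE) (auto simp: regular_fun_def
      intro: depends_on_comp2 partially_differentiable_mult)

lemma regular_fun_diff: "regular_fun f \<Longrightarrow> regular_fun g \<Longrightarrow> regular_fun (\<lambda>q. f q - g q)"
  using regular_fun_add[OF _ regular_fun_minus, of f g] by simp

lemma apply_vf_add:
  assumes "regular_fun f" "regular_fun g"
  shows "apply_vf V (\<lambda>q. f q + g q) p = apply_vf V f p + apply_vf V g p"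
proof -
  obtain S where S: "finite S" "depends_on S f" "depends_on S g"
    and "partially_differentiable f" "partially_differentiable g"
    using assms by (rule regular_funE)
  moreover have "depends_on S (\<lambda>q. f q + g q)"
    using S(2,3) by (rule depends_on_comp2)
  ultimately show ?thesis
    by (simp add: apply_vf_eq_sum pderiv_coord_add distrib_left sum.distrib)
qed

lemma apply_vf_minus:
  assumes "regular_fun f"
  shows "apply_vf V (\<lambda>q. - f q) p = - apply_vf V f p"
proof -
  obtain S where S: "finite S" "depends_on S f" and "partially_differentiable f"
    using assms unfolding regular_fun_def by blast
  moreover have "depends_on S (\<lambda>q. - f q)"
    using S(2) by (rule depends_on_comp)
  ultimately show ?thesis
    by (simp add: apply_vf_eq_sum pderiv_coord_minus sum_negf)
qed

lemma apply_vf_mult: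
  assumes "regular_fun f" "regular_fun g"
  shows "apply_vf V (\<lambda>q. f q * g q) p = f p * apply_vf V g p + apply_vf V f p * g p"
proof -
  obtain S where S: "finite S" "depends_on S f" "depends_on S g"
    and "partially_differentiable f" "partially_differentiable g"
    using assms by (rule regular_funE)
  moreover have "depends_on S (\<lambda>q. f q * g q)"
    using S(2,3) by (rule depends_on_comp2)
  ultimately show ?thesis
    by (simp add: apply_vf_eq_sum pderiv_coord_mult algebra_simps sum.distrib sum_distrib_left)
qed

lemma apply_vf_diff:
  "regular_fun f \<Longrightarrow> regular_fun g \<Longrightarrow>
    apply_vf V (\<lambda>q. f q - g q) p = apply_vf V f p - apply_vf V g p"
  using apply_vf_add[OF _ regular_fun_minus, of f g] by (simp add: apply_vf_minus)

section \<open>The coefficients X^(k) and Y^(k)\<close>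

definition sum_uv :: "pt \<Rightarrow> real" where
  "sum_uv p = p (CU 0) + p (CV 0)"

definition prod_uv :: "pt \<Rightarrow> real" where
  "prod_uv p = p (CU 0) * p (CV 0)"

lemma sigma_0: "sigma 0 p = 1"
  unfolding sigma_def by simp

lemma sigma_Suc: "sigma (Suc m) p = p (CV 0) ^ Suc m + p (CU 0) * sigma m p"
  unfolding sigma_def by (subst sum.atMost_Suc_shift) (simp add: sum_distrib_left mult.assoc)

lemma sigma_Suc_Suc: "sigma (Suc (Suc m)) p = sum_uv p * sigma (Suc m) p - prod_uv p * sigma m p"
  using sigma_Suc[of m p] sigma_Suc[of "Suc m" p]
  unfolding sum_uv_def prod_uv_def by (simp add: algebra_simps)

definition psi_sigma_sum :: "nat \<Rightarrow> pt \<Rightarrow> real" where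
  "psi_sigma_sum n p = (\<Sum>i<n. real i * psi i p * sigma (n - 1 - i) p)"

lemma Xk_add_2: "Xk (n + 2) p = sigma n p - psi_sigma_sum n p"
proof -
  have "(\<Sum>i = 1..n - 1. real i * sigma (n - 1 - i) p * psi i p) = psi_sigma_sum n p"
    unfolding psi_sigma_sum_def
    by (rule sum.mono_neutral_cong_left) (auto simp: algebra_simps)
  then show ?thesis
    unfolding Xk_def by simp
qed

lemma Xk_2: "Xk 2 = (\<lambda>_. 1)"
  by (simp add: fun_eq_iff Xk_def sigma_0)

lemma psi_sigma_sum_Suc_Suc:
  "psi_sigma_sum (Suc (Suc n)) p =
    real (Suc n) * psi (Suc n) p + sum_uv p * psi_sigma_sum (Suc n) p
      - prod_uv p * psi_sigma_sum n p"
proof -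
  have rec: "sigma (Suc n - i) p = sum_uv p * sigma (n - i) p - prod_uv p * sigma (n - 1 - i) p"
    if "i < n" for i
    using sigma_Suc_Suc[of "n - Suc i" p] that by (simp add: Suc_diff_le Suc_diff_Suc)
  have "(\<Sum>i<n. real i * psi i p * sigma (Suc n - i) p) =
      sum_uv p * (\<Sum>i<n. real i * psi i p * sigma (n - i) p) - prod_uv p * psi_sigma_sum n p"
    unfolding psi_sigma_sum_def sum_distrib_left sum_subtractf[symmetric]
    by (intro sum.cong refl) (simp add: rec algebra_simps)
  then show ?thesis
    unfolding psi_sigma_sum_def by (simp add: sigma_0 sigma_Suc algebra_simps sum_uv_def)
qed

lemma Xk_add_4:
  "Xk (n + 4) p = sum_uv p * Xk (n + 3) p - prod_uv p * Xk (n + 2) p - real (n + 1) * psi (n + 1) p"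
proof -
  have "Xk (n + 4) p = sigma (Suc (Suc n)) p - psi_sigma_sum (Suc (Suc n)) p"
    using Xk_add_2[of "Suc (Suc n)" p] by (simp add: numeral_eq_Suc)
  also have "\<dots> = sum_uv p * (sigma (Suc n) p - psi_sigma_sum (Suc n) p)
      - prod_uv p * (sigma n p - psi_sigma_sum n p) - real (n + 1) * psi (n + 1) p"
    unfolding sigma_Suc_Suc psi_sigma_sum_Suc_Suc by (simp add: algebra_simps)
  also have "\<dots> = sum_uv p * Xk (n + 3) p - prod_uv p * Xk (n + 2) p - real (n + 1) * psi (n + 1) p"
    using Xk_add_2[of "Suc n" p] Xk_add_2[of n p] by (simp add: numeral_eq_Suc)
  finally show ?thesis .
qed

definition psi_coord :: "nat \<Rightarrow> coord" where
  "psi_coord j = (if j = 1 then CY else if j = 2 then CX else CPsi j)"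

lemma psi_eq_proj: "psi j = (\<lambda>q. q (psi_coord j))"
  unfolding psi_def psi_coord_def by auto

(* X^(j), Y^(j) continued to j = 1, 2 by the components along psi^(1) = y, psi^(2) = x (and to
   the unused index 0, where they vanish), so that the recursions below hold from j = 1 resp. 2. *)
definition X_ext :: "nat \<Rightarrow> pt \<Rightarrow> real" where
  "X_ext j = Dx_star (psi_coord j)"

definition Y_ext :: "nat \<Rightarrow> pt \<Rightarrow> real" where
  "Y_ext j = Dy_star (psi_coord j)"

lemma Dx_star_psi_coord: "Dx_star (psi_coord j) = X_ext j"
  and Dy_star_psi_coord: "Dy_star (psi_coord j) = Y_ext j"
  by (simp_all add: X_ext_def Y_ext_def)

lemma X_ext_0: "X_ext 0 = (\<lambda>_. 0)"
  and Y_ext_0: "Y_ext 0 = (\<lambda>_. 0)"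
  by (simp_all add: X_ext_def Y_ext_def psi_coord_def Dx_star_def Dy_star_def)

lemma X_ext_1: "X_ext 1 = (\<lambda>_. 0)"
  and X_ext_Xk: "2 \<le> j \<Longrightarrow> X_ext j = Xk j"
  by (auto simp: X_ext_def psi_coord_def Dx_star_def Xk_2)

lemma Y_ext_1: "Y_ext 1 = (\<lambda>_. 1)"
  and Y_ext_2: "Y_ext 2 = (\<lambda>_. 0)"
  and Y_ext_Yk: "3 \<le> j \<Longrightarrow> Y_ext j = Yk j"
  by (simp_all add: Y_ext_def psi_coord_def Dy_star_def)

lemma X_ext_rec: "1 \<le> j \<Longrightarrow> X_ext j = (\<lambda>q. sum_uv q * X_ext (j - 1) q + Y_ext (j - 1) q)"
proof -
  assume "1 \<le> j"
  then consider "j = 1" | "j = 2" | "j = 3" | n where "j = n + 4"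
    by atomize_elim presburger
  then show ?thesis
  proof cases
    case 1
    then show ?thesis by (simp add: X_ext_0 X_ext_1 Y_ext_0 flip: One_nat_def)
  next
    case 2
    then show ?thesis by (simp add: X_ext_1 X_ext_Xk Xk_2 Y_ext_1 flip: One_nat_def)
  next
    case 3
    then show ?thesis
      by (simp add: X_ext_Xk Xk_2 Y_ext_2 fun_eq_iff Xk_def sigma_def sum_uv_def)
  next
    case 4
    then show ?thesis
      using Xk_add_4[of n]
      by (simp add: fun_eq_iff X_ext_Xk Y_ext_Yk Yk_def prod_uv_def algebra_simps)
  qed
qed

lemma Y_ext_rec:
  "2 \<le> j \<Longrightarrow> Y_ext j = (\<lambda>q. - (prod_uv q * X_ext (j - 1) q) - real (j - 2) * psi (j - 2) q)"
proof -
  assume "2 \<le> j"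
  then consider "j = 2" | "3 \<le> j"
    by linarith
  then show ?thesis
    by cases (simp_all add: Y_ext_2 X_ext_1 Y_ext_Yk X_ext_Xk fun_eq_iff Yk_def prod_uv_def
        flip: One_nat_def)
qed

lemma regular_fun_psi: "regular_fun (psi j)"
  by (simp add: psi_eq_proj regular_fun_proj)

lemma regular_fun_sum_uv: "regular_fun sum_uv"
  unfolding sum_uv_def[abs_def] by (intro regular_fun_add regular_fun_proj)

lemma regular_fun_prod_uv: "regular_fun prod_uv"
  unfolding prod_uv_def[abs_def] by (intro regular_fun_mult regular_fun_proj)

lemma regular_fun_X_ext_Y_ext: "regular_fun (X_ext j) \<and> regular_fun (Y_ext j)"
proof (induction j)
  case 0
  then show ?case
    by (simp add: X_ext_0 Y_ext_0 regular_fun_const)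
next
  case (Suc j)
  show ?case
  proof (cases "j = 0")
    case True
    then show ?thesis
      by (simp add: X_ext_1 Y_ext_1 regular_fun_const flip: One_nat_def)
  next
    case False
    then show ?thesis
      using Suc.IH X_ext_rec[of "Suc j"] Y_ext_rec[of "Suc j"]
      by (simp add: regular_fun_add regular_fun_mult regular_fun_diff regular_fun_minus
          regular_fun_const regular_fun_psi regular_fun_sum_uv regular_fun_prod_uv)
  qed
qed

lemma apply_vf_X_ext:
  assumes "1 \<le> j"
  shows "apply_vf V (X_ext j) p = sum_uv p * apply_vf V (X_ext (j - 1)) p
    + apply_vf V sum_uv p * X_ext (j - 1) p + apply_vf V (Y_ext (j - 1)) p"
  by (subst X_ext_rec[OF assms])
    (simp add: apply_vf_add apply_vf_mult regular_fun_add regular_fun_mult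
      regular_fun_X_ext_Y_ext regular_fun_sum_uv)

lemma apply_vf_Y_ext:
  assumes "2 \<le> j"
  shows "apply_vf V (Y_ext j) p = - (prod_uv p * apply_vf V (X_ext (j - 1)) p
    + apply_vf V prod_uv p * X_ext (j - 1) p) - real (j - 2) * apply_vf V (psi (j - 2)) p"
  by (subst Y_ext_rec[OF assms])
    (simp add: apply_vf_diff apply_vf_minus apply_vf_mult apply_vf_const regular_fun_minus
      regular_fun_mult regular_fun_const regular_fun_X_ext_Y_ext regular_fun_prod_uv
      regular_fun_psi)

lemma apply_vf_Dx_star_psi: "apply_vf Dx_star (psi j) p = X_ext j p"
  by (simp add: psi_eq_proj apply_vf_proj Dx_star_psi_coord)

lemma apply_vf_Dy_star_psi: "apply_vf Dy_star (psi j) p = Y_ext j p"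
  by (simp add: psi_eq_proj apply_vf_proj Dy_star_psi_coord)

lemma apply_vf_Dx_star_sum_uv: "apply_vf Dx_star sum_uv p = p (CU 1) + p (CV 1)"
  unfolding sum_uv_def[abs_def]
  by (simp add: apply_vf_add regular_fun_proj apply_vf_proj Dx_star_def)

lemma apply_vf_Dx_star_prod_uv:
  "apply_vf Dx_star prod_uv p = p (CU 0) * p (CV 1) + p (CU 1) * p (CV 0)"
  unfolding prod_uv_def[abs_def]
  by (simp add: apply_vf_mult regular_fun_proj apply_vf_proj Dx_star_def)

lemma rhsU_eq: "rhsU p = - (1 / (p (CU 0) - p (CV 0))) - p (CV 0) * p (CU 1)"
  unfolding rhsU_def by (metis minus_diff_eq minus_divide_right)

lemma apply_vf_Dy_star_sum_uv: "apply_vf Dy_star sum_uv p = - apply_vf Dx_star prod_uv p"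
  unfolding sum_uv_def[abs_def] apply_vf_Dx_star_prod_uv
  by (simp add: apply_vf_add regular_fun_proj apply_vf_proj Dy_star_def rhsU_eq rhsV_def)

lemma apply_vf_Dy_star_prod_uv:
  assumes "p (CU 0) \<noteq> p (CV 0)"
  shows "apply_vf Dy_star prod_uv p + sum_uv p * apply_vf Dx_star prod_uv p
    - prod_uv p * apply_vf Dx_star sum_uv p = 1"
proof -
  define w where "w = 1 / (p (CU 0) - p (CV 0))"
  have "rhsU p = - w - p (CV 0) * p (CU 1)" "rhsV p = w - p (CU 0) * p (CV 1)"
    unfolding rhsU_eq rhsV_def w_def by simp_all
  then have "apply_vf Dy_star prod_uv p = p (CU 0) * (w - p (CU 0) * p (CV 1))
      + (- w - p (CV 0) * p (CU 1)) * p (CV 0)"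
    unfolding prod_uv_def[abs_def]
    by (simp add: apply_vf_mult regular_fun_proj apply_vf_proj Dy_star_def)
  then have "apply_vf Dy_star prod_uv p + sum_uv p * apply_vf Dx_star prod_uv p
      - prod_uv p * apply_vf Dx_star sum_uv p = (p (CU 0) - p (CV 0)) * w"
    unfolding apply_vf_Dx_star_prod_uv apply_vf_Dx_star_sum_uv sum_uv_def prod_uv_def
    by (simp add: algebra_simps)
  also have "\<dots> = 1"
    using assms unfolding w_def by simp
  finally show ?thesis .
qed

lemma apply_vf_Dy_star_X_ext_step:
  assumes "p (CU 0) \<noteq> p (CV 0)"
    and IH_1: "apply_vf Dy_star (X_ext (n + 1)) p = apply_vf Dx_star (Y_ext (n + 1)) p"
    and IH_2: "apply_vf Dy_star (X_ext (n + 2)) p = apply_vf Dx_star (Y_ext (n + 2)) p"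
  shows "apply_vf Dy_star (X_ext (n + 3)) p = apply_vf Dx_star (Y_ext (n + 3)) p"
proof -
  define dx where "dx f = apply_vf Dx_star f p" for f
  define dy where "dy f = apply_vf Dy_star f p" for f
  define s where "s = sum_uv p"
  define q where "q = prod_uv p"
  define X where "X i = X_ext i p" for i
  define Y where "Y i = Y_ext i p" for i
  have dy_X: "dy (X_ext (n + 3)) =
      s * dy (X_ext (n + 2)) + dy sum_uv * X (n + 2) + dy (Y_ext (n + 2))"
    using apply_vf_X_ext[of "n + 3"] unfolding dy_def s_def X_def by simp
  have dy_Y: "dy (Y_ext (n + 2)) = - (q * dy (X_ext (n + 1)) + dy prod_uv * X (n + 1)) - n * Y n"
    using apply_vf_Y_ext[of "n + 2"] unfolding dy_def q_def X_def Y_def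
    by (simp add: apply_vf_Dy_star_psi)
  have dx_Y: "dx (Y_ext (n + 3)) =
      - (q * dx (X_ext (n + 2)) + dx prod_uv * X (n + 2)) - (n + 1) * X (n + 1)"
    using apply_vf_Y_ext[of "n + 3"] unfolding dx_def q_def X_def
    by (simp add: apply_vf_Dx_star_psi)
  have dx_X: "dx (X_ext (n + 2)) =
      s * dx (X_ext (n + 1)) + dx sum_uv * X (n + 1) + dx (Y_ext (n + 1))"
    using apply_vf_X_ext[of "n + 2"] unfolding dx_def s_def X_def by simp
  have dy_X_2: "dy (X_ext (n + 2)) = - (q * dx (X_ext (n + 1)) + dx prod_uv * X (n + 1)) - n * X n"
    using IH_2 apply_vf_Y_ext[of "n + 2"] unfolding dx_def dy_def q_def X_def
    by (simp add: apply_vf_Dx_star_psi)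
  have dy_X_1: "dy (X_ext (n + 1)) = dx (Y_ext (n + 1))"
    using IH_1 unfolding dx_def dy_def .
  have X_rec: "X (n + 1) = s * X n + Y n"
    using X_ext_rec[of "n + 1"] unfolding X_def Y_def s_def by simp
  have dy_s: "dy sum_uv = - dx prod_uv"
    unfolding dx_def dy_def by (rule apply_vf_Dy_star_sum_uv)
  have dy_q: "dy prod_uv = 1 - s * dx prod_uv + q * dx sum_uv"
    using apply_vf_Dy_star_prod_uv[OF assms(1)] unfolding dx_def dy_def s_def q_def by simp
  (* the two sides differ by X (n + 1) * (dy prod_uv + s * dx prod_uv - q * dx sum_uv - 1) *)
  have "dy (X_ext (n + 3)) = dx (Y_ext (n + 3))"
    unfolding dy_X dy_Y dx_Y dx_X dy_X_2 dy_X_1 dy_s dy_q X_rec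
    by (simp add: algebra_simps)
  then show ?thesis
    unfolding dx_def dy_def .
qed

lemma apply_vf_Dy_star_X_ext_eq_Dx_star_Y_ext:
  assumes "p (CU 0) \<noteq> p (CV 0)"
  shows "apply_vf Dy_star (X_ext j) p = apply_vf Dx_star (Y_ext j) p"
proof (induction j rule: less_induct)
  case (less j)
  show ?case
  proof (cases "j \<le> 2")
    case True
    then have "j = 0 \<or> j = 1 \<or> j = 2"
      by auto
    then show ?thesis
      by (auto simp: X_ext_0 Y_ext_0 X_ext_1 Y_ext_1 X_ext_Xk Xk_2 Y_ext_2 apply_vf_const
          simp del: One_nat_def)
  next
    case False
    then obtain n where "j = n + 3"
      by (metis add.commute le_add_diff_inverse not_less_eq_eq numeral_2_eq_2 numeral_3_eq_3)
    then show ?thesis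
      using apply_vf_Dy_star_X_ext_step[OF assms] less.IH by simp
  qed
qed

section \<open>The brackets\<close>

(* coords_below 0 are the coordinates of E_1, coords_below (k + 2) those of E_k. *)
definition coords_below :: "nat \<Rightarrow> coord set" where
  "coords_below n = {c. \<forall>j. c = CPsi j \<longrightarrow> j < n}"

lemma coords_below_mono: "m \<le> n \<Longrightarrow> coords_below m \<subseteq> coords_below n"
  unfolding coords_below_def by auto

lemma psi_coord_in_coords_below: "i < n \<Longrightarrow> psi_coord i \<in> coords_below n"
  unfolding psi_coord_def coords_below_def by auto

lemma depends_on_psi: "i < n \<Longrightarrow> depends_on (coords_below n) (psi i)"
  unfolding psi_eq_proj by (intro depends_on_proj psi_coord_in_coords_below)

lemma depends_on_sum_uv: "depends_on (coords_below n) sum_uv"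
  and depends_on_prod_uv: "depends_on (coords_below n) prod_uv"
  unfolding depends_on_def sum_uv_def prod_uv_def coords_below_def by simp_all

lemma depends_on_X_ext_Y_ext:
  "depends_on (coords_below j) (X_ext j) \<and> depends_on (coords_below j) (Y_ext j)"
proof (induction j)
  case 0
  then show ?case
    by (simp add: X_ext_0 Y_ext_0 depends_on_const)
next
  case (Suc j)
  have X: "depends_on (coords_below (Suc j)) (X_ext j)"
    and Y: "depends_on (coords_below (Suc j)) (Y_ext j)"
    using Suc.IH depends_on_mono[OF _ coords_below_mono[of j "Suc j"]] by auto
  have "depends_on (coords_below (Suc j)) (X_ext (Suc j))"
    unfolding X_ext_rec[of "Suc j", simplified]
    by (rule depends_on_comp2[OF depends_on_comp2[OF depends_on_sum_uv X] Y])
  moreover have "depends_on (coords_below (Suc j)) (Y_ext (Suc j))" if "j \<noteq> 0"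
  proof -
    have psi: "depends_on (coords_below (Suc j)) (psi (j - 1))"
      using that by (intro depends_on_psi) simp
    have "Y_ext (Suc j) = (\<lambda>q. - (prod_uv q * X_ext j q) - real (j - 1) * psi (j - 1) q)"
      using that Y_ext_rec[of "Suc j"] by simp
    then show ?thesis
      using depends_on_comp2[OF depends_on_comp2[OF depends_on_prod_uv X] psi] by simp
  qed
  ultimately show ?case
    by (cases "j = 0") (auto simp: Y_ext_1[unfolded One_nat_def] depends_on_const)
qed

lemma depends_on_Dx_funpow:
  "depends_on (coords_below 0) f \<Longrightarrow> depends_on (coords_below 0) ((apply_vf Dx ^^ i) f)"
proof (induction i)
  case (Suc i)
  have "depends_on (coords_below 0) (Dx c)" for c
    by (cases c) (simp_all add: depends_on_const depends_on_proj coords_below_def)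
  then show ?case
    using Suc by (simp add: depends_on_apply_vf)
qed simp

lemma depends_on_Dy_component:
  "depends_on (coords_below 0) ((apply_vf Dx ^^ i) rhsU)"
  "depends_on (coords_below 0) ((apply_vf Dx ^^ i) rhsV)"
  by (intro depends_on_Dx_funpow, simp add: depends_on_def rhsU_def rhsV_def coords_below_def)+

lemma depends_on_Dx_star_Dy_star:
  assumes "c \<in> coords_below n"
  shows "depends_on (coords_below n) (Dx_star c) \<and> depends_on (coords_below n) (Dy_star c)"
proof (cases c)
  case (CU i)
  have "depends_on (coords_below n) ((apply_vf Dx ^^ i) rhsU)"
    using depends_on_Dy_component(1) coords_below_mono by (rule depends_on_mono) simp
  then show ?thesis
    using CU by (simp add: Dx_star_def Dy_star_def coords_below_def depends_on_proj)
next
  case (CV i)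
  have "depends_on (coords_below n) ((apply_vf Dx ^^ i) rhsV)"
    using depends_on_Dy_component(2) coords_below_mono by (rule depends_on_mono) simp
  then show ?thesis
    using CV by (simp add: Dx_star_def Dy_star_def coords_below_def depends_on_proj)
next
  case (CPsi i)
  show ?thesis
  proof (cases "3 \<le> i")
    case True
    then have "c = psi_coord i" and "coords_below i \<subseteq> coords_below n"
      using CPsi assms by (auto simp: psi_coord_def coords_below_def)
    then show ?thesis
      using depends_on_X_ext_Y_ext[of i] depends_on_mono
      by (metis Dx_star_psi_coord Dy_star_psi_coord)
  next
    case False
    then show ?thesis
      using CPsi by (simp add: Dx_star_def Dy_star_def depends_on_const)
  qed
qed (simp_all add: Dx_star_def Dy_star_def depends_on_const)

lemma lie_bracket_cong:
  assumes "c \<in> S" "\<And>d. d \<in> S \<Longrightarrow> V d = V' d \<and> W d = W' d"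
    and "depends_on S (V c)" "depends_on S (W c)"
  shows "lie_bracket V W c p = lie_bracket V' W' c p"
proof -
  have "apply_vf V (W c) p = apply_vf V' (W c) p"
    using assms(4) by (rule apply_vf_cong) (simp add: assms(2))
  moreover have "apply_vf W (V c) p = apply_vf W' (V c) p"
    using assms(3) by (rule apply_vf_cong) (simp add: assms(2))
  ultimately show ?thesis
    unfolding lie_bracket_def using assms(1,2) by simp
qed

lemma lie_bracket_Dx_star_Dy_star:
  assumes "p (CU 0) \<noteq> p (CV 0)"
  shows "lie_bracket Dx_star Dy_star c p = 0"
proof -
  have on_E1: "apply_vf Dx_star f p = apply_vf Dx f p" if "depends_on (coords_below 0) f" for f
    using that by (rule apply_vf_cong) (auto simp: Dx_star_def coords_below_def split: coord.split)
  show ?thesis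
  proof (cases c)
    case (CU i)
    then show ?thesis
      by (simp add: lie_bracket_def Dx_star_def Dy_star_def apply_vf_proj on_E1
          depends_on_Dy_component)
  next
    case (CV i)
    then show ?thesis
      by (simp add: lie_bracket_def Dx_star_def Dy_star_def apply_vf_proj on_E1
          depends_on_Dy_component)
  next
    case (CPsi i)
    show ?thesis
    proof (cases "3 \<le> i")
      case True
      then have "c = psi_coord i"
        using CPsi by (simp add: psi_coord_def)
      then show ?thesis
        using apply_vf_Dy_star_X_ext_eq_Dx_star_Y_ext[OF assms, of i]
        by (simp add: lie_bracket_def Dx_star_psi_coord Dy_star_psi_coord)
    next
      case False
      then show ?thesis
        using CPsi by (simp add: lie_bracket_def Dx_star_def Dy_star_def apply_vf_const)
    qed
  qed (simp_all add: lie_bracket_def Dx_star_def Dy_star_def apply_vf_const)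
qed

lemma lie_bracket_Dxk_Dyk_eq:
  assumes "c \<in> coords_below (k + 2)"
  shows "lie_bracket (Dxk k) (Dyk k) c p = lie_bracket Dx_star Dy_star c p"
proof -
  have agree: "Dxk k d = Dx_star d \<and> Dyk k d = Dy_star d" if "d \<in> coords_below (k + 2)" for d
    using that by (cases d) (auto simp: Dxk_def Dyk_def Dx_star_def Dy_star_def coords_below_def)
  show ?thesis
    using agree[OF assms] depends_on_Dx_star_Dy_star[OF assms]
    by (intro lie_bracket_cong[OF assms agree]) simp_all
qed

lemma Dxk_Dyk_outside_coords_below:
  "c \<notin> coords_below (k + 2) \<Longrightarrow> Dxk k c = (\<lambda>_. 0) \<and> Dyk k c = (\<lambda>_. 0)"
  by (auto simp: coords_below_def Dxk_def Dyk_def)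

theorem mainTheorem5:
  shows "(\<forall>k::nat. k \<ge> 2 \<longrightarrow>
            (\<forall>p::pt. p (CU 0) \<noteq> p (CV 0) \<longrightarrow>
               (\<forall>c. lie_bracket (Dxk k) (Dyk k) c p = 0)))
       \<and> (\<forall>p::pt. p (CU 0) \<noteq> p (CV 0) \<longrightarrow>
               (\<forall>c. lie_bracket Dx_star Dy_star c p = 0))"
proof (intro conjI allI impI)
  fix k :: nat and p :: pt and c
  assume uv: "p (CU 0) \<noteq> p (CV 0)"
  show "lie_bracket (Dxk k) (Dyk k) c p = 0"
  proof (cases "c \<in> coords_below (k + 2)")
    case True
    then show ?thesis
      using lie_bracket_Dxk_Dyk_eq lie_bracket_Dx_star_Dy_star[OF uv] by simp
  next
    case False
    then show ?thesis
      using Dxk_Dyk_outside_coords_below by (simp add: lie_bracket_def apply_vf_const)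
  qed
qed (rule lie_bracket_Dx_star_Dy_star)

end
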